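(* Let $N, T, L \ge 1$ be integers, let $P = \lfloor T/L \rfloor \ge 1$ and $\bar{P} = N P$. Let $f = (f_1,\dots,f_N)$ with each $f_n:\mathbb{Z}\to\mathbb{R}$ be an order-$(K, R_{\max})$ multivariate LRF, i.e. there exist $K \ge 1$, vectors $\theta_n \in \mathbb{R}^K$ ($n \in [N]$), and functions $h_1,\dots,h_K:\mathbb{Z}\to\mathbb{R}$ such that $f_n(t) = \sum_{k=1}^K (\theta_n)_k h_k(t)$ for all $n\in[N]$ and $t$, where each $h_k$ is an order-$R_k$ LRF with $R_k \le R_{\max}$. Let $\boldsymbol{M}^f \in \mathbb{R}^{L\times \bar{P}}$ be the stacked Page matrix of $f$, defined by $M^f_{i,\, j + P(n-1)} = f_n(i + (j-1)L)$ for $i\in[L]$, $j\in[P]$, $n\in[N]$. Then $\operatorname{rank}(\boldsymbol{M}^f) \le K \cdot R_{\max}$.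
   Context: $[m] := \{1,\dots,m\}$. A function $h:\mathbb{Z}\to\mathbb{R}$ is called an order-$R$ (univariate) linear recurrent formula (LRF) (relative to the horizon $T$) if there exist functions $g_r, \tilde h_r : \mathbb{Z}\to\mathbb{R}$, $r\in[R]$, such that $h(i+j) = \sum_{r=1}^R g_r(i)\,\tilde h_r(j)$ for all integers $i, j \ge 0$ with $i + j \le T$. *)

theory Defs
  imports Complex_Main "Jordan_Normal_Form.DL_Rank"
begin

definition is_LRF :: "nat \<Rightarrow> nat \<Rightarrow> (int \<Rightarrow> real) \<Rightarrow> bool" where
  "is_LRF T R h \<longleftrightarrow>
     (\<exists>(g :: nat \<Rightarrow> int \<Rightarrow> real) (ht :: nat \<Rightarrow> int \<Rightarrow> real).
        \<forall>i j :: int. 0 \<le> i \<longrightarrow> 0 \<le> j \<longrightarrow> i + j \<le> int T \<longrightarrow>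
          h (i + j) = (\<Sum>r = 1..R. g r i * ht r j))"

definition is_mLRF :: "nat \<Rightarrow> nat \<Rightarrow> nat \<Rightarrow> nat \<Rightarrow> (nat \<Rightarrow> int \<Rightarrow> real) \<Rightarrow> bool" where
  "is_mLRF T N K Rmax f \<longleftrightarrow> 1 \<le> K \<and>
     (\<exists>(\<theta> :: nat \<Rightarrow> nat \<Rightarrow> real) (h :: nat \<Rightarrow> int \<Rightarrow> real) (R :: nat \<Rightarrow> nat).
        (\<forall>n \<in> {1..N}. \<forall>t. f n t = (\<Sum>k = 1..K. \<theta> n k * h k t)) \<and>
        (\<forall>k \<in> {1..K}. is_LRF T (R k) (h k) \<and> R k \<le> Rmax))"

text \<open>Jordan_Normal_Form matrices are
  0-indexed: entry (i, c) with 0-based row i and column c = (j-1) + P(n-1) is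
  f_n((i+1) + (j-1) L), i.e. n = c div P + 1 and j - 1 = c mod P.\<close>
definition stacked_page_matrix :: "nat \<Rightarrow> nat \<Rightarrow> nat \<Rightarrow> (nat \<Rightarrow> int \<Rightarrow> real) \<Rightarrow> real mat" where
  "stacked_page_matrix N T L f =
     (let P = T div L in
      mat L (N * P) (\<lambda>(i, c). f (c div P + 1) (int (i + 1) + int (c mod P) * int L)))"

end

theory Submission
  imports Defs
begin

text \<open>Every entry of the Page matrix is f_n(s + t) with s = (j-1)L and t = i + 1 inside the
  horizon, and the LRF structure splits such a value as a sum of K * Rmax products of a
  function of the column (through n and s) and a function of the row (through t).  The
  matrix is thus a sum of at most K * Rmax rank-one matrices, and rank is subadditive.\<close>

lemma rank_mat_sum_of_products_le_card:
  fixes u v :: "'q \<Rightarrow> nat \<Rightarrow> real"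
  assumes "finite S"
  shows "vec_space.rank n (mat n m (\<lambda>(i, c). \<Sum>q\<in>S. u q i * v q c)) \<le> card S"
  using assms
proof (induction S rule: finite_induct)
  case empty
  have "mat n m (\<lambda>(i, c). \<Sum>q\<in>{}. u q i * v q c) = (0\<^sub>m n m :: real mat)"
    by (auto simp: zero_mat_def)
  then show ?case by (simp only: card.empty vec_space.rank_0I)
next
  case (insert x F)
  let ?A = "mat n m (\<lambda>(i, c). u x i * v x c)"
  let ?B = "mat n m (\<lambda>(i, c). \<Sum>q\<in>F. u q i * v q c)"
  have "mat n m (\<lambda>(i, c). \<Sum>q\<in>insert x F. u q i * v q c) = ?A + ?B"
    using insert by (auto intro!: eq_matI)
  moreover have "vec_space.rank n (?A + ?B) \<le> vec_space.rank n ?A + vec_space.rank n ?B"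
    by (rule vec_space.rank_subadditive) auto
  moreover have "vec_space.rank n ?A \<le> 1"
    by (rule vec_space.rank_le_1_product_entries[where f = "u x" and g = "v x"]) auto
  ultimately show ?case using insert by simp
qed

lemma is_LRF_mono:
  assumes "is_LRF T R h" and "R \<le> R'"
  shows "is_LRF T R' h"
proof -
  obtain g ht where ght: "\<And>i j. 0 \<le> i \<Longrightarrow> 0 \<le> j \<Longrightarrow> i + j \<le> int T \<Longrightarrow>
      h (i + j) = (\<Sum>r = 1..R. g r i * ht r j)"
    using assms(1) unfolding is_LRF_def by blast
  define g' where "g' = (\<lambda>r. if r \<le> R then g r else (\<lambda>_. 0))"
  have "(\<Sum>r = 1..R'. g' r i * ht r j) = (\<Sum>r = 1..R. g r i * ht r j)" for i j
    using assms(2) by (intro sum.mono_neutral_cong_right) (auto simp: g'_def)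
  then show ?thesis
    unfolding is_LRF_def using ght by metis
qed

lemma is_mLRF_separable:
  assumes "is_mLRF T N K Rmax f"
  obtains a :: "nat \<Rightarrow> nat \<times> nat \<Rightarrow> int \<Rightarrow> real" and b :: "nat \<times> nat \<Rightarrow> int \<Rightarrow> real"
  where "\<And>n s t. n \<in> {1..N} \<Longrightarrow> 0 \<le> s \<Longrightarrow> 0 \<le> t \<Longrightarrow> s + t \<le> int T \<Longrightarrow>
      f n (s + t) = (\<Sum>q \<in> {1..K} \<times> {1..Rmax}. a n q s * b q t)"
proof -
  obtain \<theta> h R where f: "\<And>n t. n \<in> {1..N} \<Longrightarrow> f n t = (\<Sum>k = 1..K. \<theta> n k * h k t)"
    and lrf: "\<And>k. k \<in> {1..K} \<Longrightarrow> is_LRF T (R k) (h k) \<and> R k \<le> Rmax"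
    using assms unfolding is_mLRF_def by blast
  have "\<forall>k. \<exists>g ht. k \<in> {1..K} \<longrightarrow> (\<forall>s t. 0 \<le> s \<longrightarrow> 0 \<le> t \<longrightarrow> s + t \<le> int T \<longrightarrow>
      h k (s + t) = (\<Sum>r = 1..Rmax. g r s * ht r t))"
    using lrf is_LRF_mono unfolding is_LRF_def by blast
  then obtain g ht where ght: "\<And>k s t. k \<in> {1..K} \<Longrightarrow> 0 \<le> s \<Longrightarrow> 0 \<le> t \<Longrightarrow>
      s + t \<le> int T \<Longrightarrow> h k (s + t) = (\<Sum>r = 1..Rmax. g k r s * ht k r t)"
    by metis
  have "f n (s + t) = (\<Sum>q \<in> {1..K} \<times> {1..Rmax}.
      (\<lambda>(k, r). \<theta> n k * g k r s) q * (\<lambda>(k, r). ht k r t) q)"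
    if "n \<in> {1..N}" "0 \<le> s" "0 \<le> t" "s + t \<le> int T" for n s t
  proof -
    have "f n (s + t) = (\<Sum>k = 1..K. \<theta> n k * (\<Sum>r = 1..Rmax. g k r s * ht k r t))"
      using that by (simp add: f ght)
    also have "\<dots> = (\<Sum>k = 1..K. \<Sum>r = 1..Rmax. \<theta> n k * g k r s * ht k r t)"
      by (simp add: sum_distrib_left mult.assoc)
    finally show ?thesis
      by (simp add: sum.cartesian_product split_def mult.assoc)
  qed
  then show thesis by (rule that)
qed

lemma page_index_bounds:
  assumes "0 < P" and "P * L \<le> T" and "i < L" and "c < N * P"
  shows "c div P < N" and "int (c mod P) * int L + int (i + 1) \<le> int T"
proof -
  show "c div P < N"
    using assms(1,4) by (simp add: div_less_iff_less_mult mult.commute)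
  have "(c mod P + 1) * L \<le> P * L"
    using assms(1) by (intro mult_le_mono1) (simp add: Suc_leI)
  then have "c mod P * L + (i + 1) \<le> T"
    using assms(2,3) by (simp add: algebra_simps)
  then show "int (c mod P) * int L + int (i + 1) \<le> int T"
    by (metis of_nat_add of_nat_le_iff of_nat_mult)
qed

theorem proposition3p2:
  fixes N T L K Rmax :: nat and f :: "nat \<Rightarrow> int \<Rightarrow> real"
  assumes "N \<ge> 1" and "T \<ge> 1" and "L \<ge> 1" and "T div L \<ge> 1"
    and "is_mLRF T N K Rmax f"
  shows "vec_space.rank L (stacked_page_matrix N T L f) \<le> K * Rmax"
proof -
  define P where "P = T div L"
  obtain a b where ab: "\<And>n s t. n \<in> {1..N} \<Longrightarrow> 0 \<le> s \<Longrightarrow> 0 \<le> t \<Longrightarrow> s + t \<le> int T \<Longrightarrow>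
      f n (s + t) = (\<Sum>q \<in> {1..K} \<times> {1..Rmax}. a n q s * b q t)"
    using is_mLRF_separable[OF assms(5)] by blast
  have P: "0 < P" "P * L \<le> T"
    using assms(4) by (simp_all add: P_def)
  have "stacked_page_matrix N T L f = mat L (N * P) (\<lambda>(i, c).
      \<Sum>q \<in> {1..K} \<times> {1..Rmax}. b q (int (i + 1)) * a (c div P + 1) q (int (c mod P) * int L))"
    (is "_ = ?M")
  proof (rule eq_matI)
    fix i c assume "i < dim_row ?M" and "c < dim_col ?M"
    then have "i < L" "c < N * P" by simp_all
    with page_index_bounds[OF P this] have "f (c div P + 1) (int (c mod P) * int L + int (i + 1))
        = (\<Sum>q \<in> {1..K} \<times> {1..Rmax}. a (c div P + 1) q (int (c mod P) * int L) * b q (int (i + 1)))"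
      by (intro ab) auto
    with \<open>i < L\<close> \<open>c < N * P\<close> show "stacked_page_matrix N T L f $$ (i, c) = ?M $$ (i, c)"
      by (simp add: stacked_page_matrix_def P_def[symmetric] add.commute mult.commute)
  qed (simp_all add: stacked_page_matrix_def P_def Let_def)
  also have "vec_space.rank L \<dots> \<le> card ({1..K} \<times> {1..Rmax})"
    by (rule rank_mat_sum_of_products_le_card) simp
  finally show ?thesis by simp
qed

end
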